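(* Let $t\in\{w,m\}$ index two types with masses $\mu_w>0,\mu_m>0$, $r:=\mu_w/\mu_m$. Suppose there are parameters $r^e_t\in(0,1)$, $c_t\ge0$, $C_t>0$ ($t\in\{w,m\}$) such that for all $u\in(0,1)$, $$h_t(u)=\frac{c_t}{u},\qquad F_{\Delta_t}^{-1}(1-u)=C_t\,\frac{r^e_t-u}{u(1-u)},$$ where $F_{\Delta_t}$ is the cumulative distribution function of the sector-1 advantage $\Delta_t=Y_{1t}-Y_{2t}$. Let $\gamma_w:=\frac{\mu_m}{\mu_w}\frac{c_w}{C_w}$ and $\gamma_m:=\frac{\mu_w}{\mu_m}\frac{c_m}{C_m}$. If $0<r^e_w<r^e_m<1$ and $\gamma_w+\gamma_m<1$, then there is a unique equilibrium $(r_w^*,r_m^* )$, and: (1) if $\bar\gamma:=\max\{\gamma_w r^e_m/r^e_w+\gamma_m,\ \gamma_w+\gamma_m(1-r^e_w)/(1-r^e_m)\}<1$, then $$r_w^*=r_w^e-\frac{\gamma_w}{1-\gamma_w-\gamma_m}(r_m^e-r_w^e),\qquad r_m^*=r_m^e+\frac{\gamma_m}{1-\gamma_w-\gamma_m}(r_m^e-r_w^e);$$ (2) if $\gamma_w r^e_m/r^e_w+\gamma_m\ge1$ and $\gamma_m<1-r^e_m$, then $r_w^*=0$ and $r_m^*=r^e_m/(1-\gamma_m)$; (3) if $\gamma_w<r^e_w$ and $\gamma_w+\gamma_m(1-r^e_w)/(1-r^e_m)\ge1$, then $r_w^*=(r^e_w-\gamma_w)/(1-\gamma_w)$ and $r_m^*=1$;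 (4) if $\gamma_w\ge r^e_w$ and $\gamma_m\ge1-r^e_m$, then $r_w^*=0$ and $r_m^*=1$.
   Context: For $x,y\in(0,1)$, $z>0$, define $g_t(x,y,z):=h_t\left(\frac{1}{1+z y/x}\right)-h_t\left(\frac{1}{1+z(1-y)/(1-x)}\right)$. A composition is a pair $(r_w,r_m)\in[0,1]^2$, $r_t$ being the share of type-$t$ individuals choosing sector 1. An equilibrium is a composition $(r_w^*,r_m^* )$ such that: (i) if $r_w^*\in(0,1)$ then $F_{\Delta_w}^{-1}(1-r_w^* )=g_w(r_w^*,r_m^*,1/r)$, and if $r_m^*\in(0,1)$ then $F_{\Delta_m}^{-1}(1-r_m^* )=g_m(r_m^*,r_w^*,r)$; (ii) if $r_w^*=0$, there is $\bar\delta>0$ such that for all $0<\delta<\bar\delta$, $F_{\Delta_w}^{-1}(1-\delta)\le g_w(\delta,r_m^*,1/r)$; (iii) if $r_m^*=1$, there is $\bar\delta>0$ such that for all $0<\delta<\bar\delta$, $F_{\Delta_m}^{-1}(\delta)\ge g_m(1-\delta,r_w^*,r)$; (iv) symmetrically, if $r_w^*=1$, there is $\bar\delta>0$ such that for all $0<\delta<\bar\delta$, $F_{\Delta_w}^{-1}(\delta)\ge g_w(1-\delta,r_m^*,1/r)$, and if $r_m^*=0$, there is $\bar\delta>0$ such that for all $0<\delta<\bar\delta$, $F_{\Delta_m}^{-1}(1-\delta)\le g_m(\delta,r_w^*,r)$. *)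

theory Defs
  imports Complex_Main
begin

definition gfun :: "(real \<Rightarrow> real) \<Rightarrow> real \<Rightarrow> real \<Rightarrow> real \<Rightarrow> real" where
  "gfun h x y z = h (1 / (1 + z * y / x)) - h (1 / (1 + z * (1 - y) / (1 - x)))"

text \<open>Equilibrium composition (rw, rm). hw, hm are h_w, h_m; Fw, Fm are the
  quantile functions F_{Delta_w}^{-1}, F_{Delta_m}^{-1}; r = mu_w / mu_m.\<close>
definition equilibrium ::
  "(real \<Rightarrow> real) \<Rightarrow> (real \<Rightarrow> real) \<Rightarrow> (real \<Rightarrow> real) \<Rightarrow> (real \<Rightarrow> real) \<Rightarrow> real \<Rightarrow> real \<Rightarrow> real \<Rightarrow> bool" where
  "equilibrium hw hm Fw Fm r rw rm \<longleftrightarrow>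
     rw \<in> {0..1} \<and> rm \<in> {0..1} \<and>
     (rw \<in> {0<..<1} \<longrightarrow> Fw (1 - rw) = gfun hw rw rm (1 / r)) \<and>
     (rm \<in> {0<..<1} \<longrightarrow> Fm (1 - rm) = gfun hm rm rw r) \<and>
     (rw = 0 \<longrightarrow> (\<exists>db>0. \<forall>d. 0 < d \<and> d < db \<longrightarrow> Fw (1 - d) \<le> gfun hw d rm (1 / r))) \<and>
     (rm = 1 \<longrightarrow> (\<exists>db>0. \<forall>d. 0 < d \<and> d < db \<longrightarrow> Fm d \<ge> gfun hm (1 - d) rw r)) \<and>
     (rw = 1 \<longrightarrow> (\<exists>db>0. \<forall>d. 0 < d \<and> d < db \<longrightarrow> Fw d \<ge> gfun hw (1 - d) rm (1 / r))) \<and>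
     (rm = 0 \<longrightarrow> (\<exists>db>0. \<forall>d. 0 < d \<and> d < db \<longrightarrow> Fm (1 - d) \<le> gfun hm d rw r))"

end

theory Submission
  imports Defs
begin

text \<open>With \<open>h\<^sub>t u = c\<^sub>t / u\<close> and the given quantile functions, the indifference condition of a type
  is affine in both shares, and the boundary conditions are its limits at \<open>\<delta> \<rightarrow> 0\<close>. Hence a type's
  equilibrium share is the affine best response \<open>(r\<^sup>e - \<gamma> r') / (1 - \<gamma>)\<close> to the other type's share
  \<open>r'\<close>, clamped to \<open>[0, 1]\<close>; its slope is \<open>\<gamma> / (1 - \<gamma>)\<close>. Since \<open>\<gamma>\<^sub>w + \<gamma>\<^sub>m < 1\<close>, the product of the
  two slopes is below 1, so the composed best response is a contraction and the equilibrium is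
  unique. Existence and the closed forms follow by checking that in each of the four parameter
  regimes the claimed point is a fixed point, and that the regimes cover all parameters.\<close>

lemma eventually_at_right_0_le_mult_iff:
  fixes e k :: real
  assumes "0 \<le> k"
  shows "(\<forall>\<^sub>F d in at_right 0. e \<le> k * d) \<longleftrightarrow> e \<le> 0"
proof
  assume ev: "\<forall>\<^sub>F d in at_right 0. e \<le> k * d"
  have "((\<lambda>d. k * d) \<longlongrightarrow> 0) (at_right 0)"
    by (intro tendsto_eq_intros) auto
  show "e \<le> 0"
  proof (rule ccontr)
    assume "\<not> e \<le> 0"
    then have "\<forall>\<^sub>F d in at_right 0. k * d < e"
      using \<open>((\<lambda>d. k * d) \<longlongrightarrow> 0) (at_right 0)\<close> by (simp add: order_tendstoD)
    with ev have "\<forall>\<^sub>F d in at_right (0::real). False"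
      by eventually_elim simp
    then show False by simp
  qed
next
  assume "e \<le> 0"
  show "\<forall>\<^sub>F d in at_right 0. e \<le> k * d"
    using eventually_at_right_less[of "0::real"]
    by (rule eventually_mono) (use \<open>e \<le> 0\<close> assms in \<open>auto intro: order_trans[OF _ mult_nonneg_nonneg]\<close>)
qed

lemma ex_right_nbhd_iff_le_0:
  fixes P :: "real \<Rightarrow> bool"
  assumes "0 \<le> k" and "\<And>d. 0 < d \<Longrightarrow> d < 1 \<Longrightarrow> P d \<longleftrightarrow> e \<le> k * d"
  shows "(\<exists>db>0. \<forall>d. 0 < d \<and> d < db \<longrightarrow> P d) \<longleftrightarrow> e \<le> 0"
proof -
  have "eventually P (at_right 0) \<longleftrightarrow> (\<forall>\<^sub>F d in at_right 0. e \<le> k * d)"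
    by (rule eventually_subst) (auto simp: eventually_at_right_field assms(2) intro!: exI[of _ 1])
  moreover have "(\<exists>db>0. \<forall>d. 0 < d \<and> d < db \<longrightarrow> P d) \<longleftrightarrow> eventually P (at_right 0)"
    unfolding eventually_at_right_field by blast
  ultimately show ?thesis
    using eventually_at_right_0_le_mult_iff[OF assms(1)] by simp
qed

lemma eq_max_0_min_1_iff:
  fixes x v :: real
  shows "x = max 0 (min 1 v) \<longleftrightarrow>
    x \<in> {0..1} \<and> (x \<in> {0<..<1} \<longrightarrow> x = v) \<and> (x = 0 \<longrightarrow> v \<le> 0) \<and> (x = 1 \<longrightarrow> 1 \<le> v)"
  by (auto simp: max_def min_def)

lemma abs_max_0_min_1_diff_le:
  fixes v w :: real
  shows "\<bar>max 0 (min 1 v) - max 0 (min 1 w)\<bar> \<le> \<bar>v - w\<bar>"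
  by (auto simp: max_def min_def)

lemma gfun_reciprocal:
  assumes h: "\<forall>u. 0 < u \<and> u \<le> 1 \<longrightarrow> h u = c / u"
    and "0 < x" "x < 1" "0 \<le> y" "y \<le> 1" "0 < z"
  shows "gfun h x y z = c * z * (y - x) / (x * (1 - x))"
proof -
  have recip: "h (1 / (1 + t)) = c * (1 + t)" if "0 \<le> t" for t
  proof -
    have "0 < 1 / (1 + t)" "1 / (1 + t) \<le> 1"
      using that by auto
    then show ?thesis
      using h by simp
  qed
  have "gfun h x y z = c * (1 + z * y / x) - c * (1 + z * (1 - y) / (1 - x))"
    unfolding gfun_def using assms by (simp add: recip)
  also have "\<dots> = c * z * (y - x) / (x * (1 - x))"
    using assms by (simp add: field_simps)
  finally show ?thesis .
qed

text \<open>The part of \<^const>\<open>equilibrium\<close> about one type: \<open>x\<close> is its share in sector 1, \<open>y\<close> the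
  share of the other type, and \<open>z\<close> the mass ratio in \<^const>\<open>gfun\<close>.\<close>
definition best_response :: "(real \<Rightarrow> real) \<Rightarrow> (real \<Rightarrow> real) \<Rightarrow> real \<Rightarrow> real \<Rightarrow> real \<Rightarrow> bool" where
  "best_response h F z y x \<longleftrightarrow> x \<in> {0..1} \<and>
     (x \<in> {0<..<1} \<longrightarrow> F (1 - x) = gfun h x y z) \<and>
     (x = 0 \<longrightarrow> (\<exists>db>0. \<forall>d. 0 < d \<and> d < db \<longrightarrow> F (1 - d) \<le> gfun h d y z)) \<and>
     (x = 1 \<longrightarrow> (\<exists>db>0. \<forall>d. 0 < d \<and> d < db \<longrightarrow> F d \<ge> gfun h (1 - d) y z))"

lemma equilibrium_iff_best_responses:
  "equilibrium hw hm Fw Fm r rw rm \<longleftrightarrow>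
    best_response hw Fw (1 / r) rm rw \<and> best_response hm Fm r rw rm"
  unfolding equilibrium_def best_response_def by blast

definition linear_best_response :: "real \<Rightarrow> real \<Rightarrow> real \<Rightarrow> real" where
  "linear_best_response a g y = max 0 (min 1 ((a - g * y) / (1 - g)))"

lemma best_response_reciprocal_iff:
  fixes h F :: "real \<Rightarrow> real"
  assumes h: "\<forall>u. 0 < u \<and> u \<le> 1 \<longrightarrow> h u = c / u"
    and F: "\<forall>u. 0 < u \<and> u < 1 \<longrightarrow> F (1 - u) = C * (a - u) / (u * (1 - u))"
    and "0 < C" "0 < z" and g: "g = c * z / C" "g < 1" and "0 \<le> y" "y \<le> 1"
  shows "best_response h F z y x \<longleftrightarrow> x = linear_best_response a g y"
proof -
  define e k where "e = a - g * y" and "k = 1 - g"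
  have "0 < k" using g by (simp add: k_def)
  have sign: "F (1 - u) = gfun h u y z \<longleftrightarrow> e = k * u"
      "F (1 - u) \<le> gfun h u y z \<longleftrightarrow> e \<le> k * u" if "0 < u" "u < 1" for u
  proof -
    have "F (1 - u) = gfun h u y z + (C * (a - u) - c * z * (y - u)) / (u * (1 - u))"
      using that F gfun_reciprocal[OF h that \<open>0 \<le> y\<close> \<open>y \<le> 1\<close> \<open>0 < z\<close>]
      by (simp add: diff_divide_distrib)
    also have "c * z = g * C"
      using \<open>0 < C\<close> g by simp
    also have "C * (a - u) - g * C * (y - u) = C * (e - k * u)"
      by (simp add: e_def k_def algebra_simps)
    finally have "F (1 - u) = gfun h u y z + C / (u * (1 - u)) * (e - k * u)"
      by simp
    moreover have "0 < u * (1 - u)"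
      using that by simp
    ultimately show "F (1 - u) = gfun h u y z \<longleftrightarrow> e = k * u"
      "F (1 - u) \<le> gfun h u y z \<longleftrightarrow> e \<le> k * u"
      using that \<open>0 < C\<close> by (simp_all add: divide_le_0_iff mult_le_0_iff)
  qed
  have interior: "F (1 - x) = gfun h x y z \<longleftrightarrow> x = e / k" if "x \<in> {0<..<1}"
    using sign(1) that \<open>0 < k\<close> by (auto simp: field_simps)
  have at_0: "(\<exists>db>0. \<forall>d. 0 < d \<and> d < db \<longrightarrow> F (1 - d) \<le> gfun h d y z) \<longleftrightarrow> e / k \<le> 0"
    using ex_right_nbhd_iff_le_0[of k] sign(2) \<open>0 < k\<close> by (simp add: divide_le_0_iff)
  have "F d \<ge> gfun h (1 - d) y z \<longleftrightarrow> k - e \<le> k * d" if "0 < d" "d < 1" for d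
    using sign[of "1 - d"] that by (auto simp: algebra_simps)
  then have at_1: "(\<exists>db>0. \<forall>d. 0 < d \<and> d < db \<longrightarrow> F d \<ge> gfun h (1 - d) y z) \<longleftrightarrow> 1 \<le> e / k"
    using ex_right_nbhd_iff_le_0[of k] \<open>0 < k\<close> by (simp add: le_divide_eq)
  show ?thesis
    unfolding best_response_def linear_best_response_def eq_max_0_min_1_iff
    using interior at_0 at_1 by (auto simp: e_def k_def)
qed

lemma linear_best_response_lipschitz:
  assumes "0 \<le> g" "g < 1"
  shows "\<bar>linear_best_response a g s - linear_best_response a g t\<bar> \<le> g / (1 - g) * \<bar>s - t\<bar>"
proof -
  have "\<bar>linear_best_response a g s - linear_best_response a g t\<bar>
      \<le> \<bar>(a - g * s) / (1 - g) - (a - g * t) / (1 - g)\<bar>"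
    unfolding linear_best_response_def by (rule abs_max_0_min_1_diff_le)
  also have "(a - g * s) / (1 - g) - (a - g * t) / (1 - g) = g / (1 - g) * (t - s)"
    by (simp add: diff_divide_distrib algebra_simps)
  also have "\<bar>g / (1 - g) * (t - s)\<bar> = g / (1 - g) * \<bar>s - t\<bar>"
    using assms by (simp add: abs_mult abs_minus_commute)
  finally show ?thesis .
qed

definition linear_equilibrium :: "real \<Rightarrow> real \<Rightarrow> real \<Rightarrow> real \<Rightarrow> real \<Rightarrow> real \<Rightarrow> bool" where
  "linear_equilibrium a b x y p q \<longleftrightarrow>
     p = linear_best_response a x q \<and> q = linear_best_response b y p"

lemma linear_equilibrium_unique:
  assumes "0 \<le> x" "0 \<le> y" "x + y < 1"
    and eq: "linear_equilibrium a b x y p q" and eq': "linear_equilibrium a b x y p' q'"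
  shows "p = p' \<and> q = q'"
proof -
  have "x < 1" "y < 1"
    using assms(1-3) by linarith+
  have p: "p = linear_best_response a x q" "p' = linear_best_response a x q'"
    and q: "q = linear_best_response b y p" "q' = linear_best_response b y p'"
    using eq eq' unfolding linear_equilibrium_def by blast+
  define K where "K = x / (1 - x) * (y / (1 - y))"
  have "\<bar>p - p'\<bar> \<le> x / (1 - x) * \<bar>q - q'\<bar>"
    unfolding p by (rule linear_best_response_lipschitz[OF \<open>0 \<le> x\<close> \<open>x < 1\<close>])
  also have "\<dots> \<le> x / (1 - x) * (y / (1 - y) * \<bar>p - p'\<bar>)"
    unfolding q
    using linear_best_response_lipschitz[OF \<open>0 \<le> y\<close> \<open>y < 1\<close>] \<open>0 \<le> x\<close> \<open>x < 1\<close>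
    by (intro mult_left_mono) auto
  finally have "(1 - K) * \<bar>p - p'\<bar> \<le> 0"
    unfolding K_def by (simp add: left_diff_distrib)
  moreover have "x * y < (1 - x) * (1 - y)"
    using assms(3) by (simp add: algebra_simps)
  then have "K < 1"
    unfolding K_def using \<open>x < 1\<close> \<open>y < 1\<close> by (simp add: divide_less_eq)
  ultimately have "p = p'"
    by (simp add: mult_le_0_iff)
  then show ?thesis
    using q by simp
qed

lemma linear_equilibrium_interior:
  assumes "0 < a" "a < b" "b < 1" "0 \<le> x" "0 \<le> y" "x + y < 1"
    and "max (x * b / a + y) (x + y * (1 - a) / (1 - b)) < 1"
  shows "linear_equilibrium a b x y (a - x / (1 - x - y) * (b - a)) (b + y / (1 - x - y) * (b - a))"
proof -
  define D where "D = (b - a) / (1 - x - y)"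
  have "0 < 1 - x - y" "x < 1" "y < 1"
    using assms(4-6) by linarith+
  then have "0 \<le> D"
    using assms(2) by (simp add: D_def)
  have "x * b < a * (1 - y)" "y * (1 - a) < (1 - x) * (1 - b)"
    using assms by (simp_all add: field_simps)
  moreover have "(a - x * D) * (1 - x - y) = a * (1 - y) - x * b"
    and "(1 - (b + y * D)) * (1 - x - y) = (1 - x) * (1 - b) - y * (1 - a)"
    using \<open>0 < 1 - x - y\<close> by (simp_all add: D_def field_simps)
  ultimately have "0 < (a - x * D) * (1 - x - y)" "0 < (1 - (b + y * D)) * (1 - x - y)"
    by simp_all
  then have "0 < a - x * D" "0 < 1 - (b + y * D)"
    using zero_less_mult_pos2[OF _ \<open>0 < 1 - x - y\<close>] by blast+
  moreover have "a - x * D \<le> a" "b \<le> b + y * D"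
    using \<open>0 \<le> D\<close> assms(4,5) by simp_all
  moreover have "(a - x * (b + y * D)) / (1 - x) = a - x * D"
    and "(b - y * (a - x * D)) / (1 - y) = b + y * D"
  proof -
    have "D * (1 - x - y) = b - a"
      using \<open>0 < 1 - x - y\<close> by (simp add: D_def)
    moreover have "a - x * (b + y * D) = (a - x * D) * (1 - x) + x * (D * (1 - x - y) - (b - a))"
      and "b - y * (a - x * D) = (b + y * D) * (1 - y) - y * (D * (1 - x - y) - (b - a))"
      by (simp_all add: algebra_simps)
    ultimately show "(a - x * (b + y * D)) / (1 - x) = a - x * D"
      and "(b - y * (a - x * D)) / (1 - y) = b + y * D"
      using \<open>x < 1\<close> \<open>y < 1\<close> by simp_all
  qed
  ultimately have "linear_equilibrium a b x y (a - x * D) (b + y * D)"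
    using assms(1-3) by (simp add: linear_equilibrium_def linear_best_response_def)
  then show ?thesis
    by (simp add: D_def mult.commute)
qed

lemma linear_equilibrium_zero_interior:
  assumes "0 < a" "a < b" "b < 1" "0 \<le> x" "0 \<le> y" "x + y < 1"
    and "x * b / a + y \<ge> 1" "y < 1 - b"
  shows "linear_equilibrium a b x y 0 (b / (1 - y))"
proof -
  have "x < 1" "y < 1"
    using assms(4-6) by linarith+
  have "a * (1 - y) \<le> x * b"
    using assms(1,7) by (simp add: field_simps)
  then have "a - x * (b / (1 - y)) \<le> 0"
    using \<open>y < 1\<close> by (simp add: field_simps)
  then have "(a - x * (b / (1 - y))) / (1 - x) \<le> 0"
    using \<open>x < 1\<close> by (simp add: divide_nonpos_pos)
  moreover have "b / (1 - y) < 1"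
    using assms(8) \<open>y < 1\<close> by (simp add: divide_less_eq)
  ultimately show ?thesis
    using assms by (simp add: linear_equilibrium_def linear_best_response_def)
qed

lemma linear_equilibrium_interior_one:
  assumes "0 < a" "a < b" "b < 1" "0 \<le> x" "0 \<le> y" "x + y < 1"
    and "x < a" "x + y * (1 - a) / (1 - b) \<ge> 1"
  shows "linear_equilibrium a b x y ((a - x) / (1 - x)) 1"
proof -
  have "x < 1" "y < 1"
    using assms(4-6) by linarith+
  have "(1 - x) * (1 - b) \<le> y * (1 - a)"
    using assms(3,8) by (simp add: field_simps)
  then have "1 - b \<le> y * (1 - (a - x) / (1 - x))"
    using \<open>x < 1\<close> by (simp add: field_simps)
  then have "1 \<le> (b - y * ((a - x) / (1 - x))) / (1 - y)"
    using \<open>y < 1\<close> by (simp add: le_divide_eq algebra_simps)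
  moreover have "0 < (a - x) / (1 - x)" "(a - x) / (1 - x) < 1"
    using assms(1-3,7) \<open>x < 1\<close> by (simp_all add: divide_less_eq)
  ultimately show ?thesis
    by (simp add: linear_equilibrium_def linear_best_response_def)
qed

lemma linear_equilibrium_zero_one:
  assumes "0 < a" "a < b" "b < 1" "0 \<le> x" "0 \<le> y" "x + y < 1"
    and "x \<ge> a" "y \<ge> 1 - b"
  shows "linear_equilibrium a b x y 0 1"
proof -
  have "x < 1" "y < 1"
    using assms(4-6) by linarith+
  then have "(a - x) / (1 - x) \<le> 0" "1 \<le> b / (1 - y)"
    using assms(7,8) by (simp_all add: divide_nonpos_pos le_divide_eq)
  then show ?thesis
    by (simp add: linear_equilibrium_def linear_best_response_def)
qed

lemma linear_equilibrium_exists: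
  assumes "0 < a" "a < b" "b < 1" "0 \<le> x" "0 \<le> y" "x + y < 1"
  shows "\<exists>p q. linear_equilibrium a b x y p q"
proof -
  define \<Gamma>w \<Gamma>m where "\<Gamma>w = x * b / a + y" and "\<Gamma>m = x + y * (1 - a) / (1 - b)"
  \<comment> \<open>The identity relating the two regime indices, which makes the four regimes exhaustive.\<close>
  have link: "b * (1 - b) * (1 - \<Gamma>m) = a * (1 - b) * (1 - \<Gamma>w) + (b - a) * (1 - b - y)"
    using assms(1,3) by (simp add: \<Gamma>w_def \<Gamma>m_def field_simps)
  have "0 < b * (1 - b)" "0 < a * (1 - b)" "0 < b - a"
    using assms(1-3) by simp_all
  then have "\<Gamma>m \<ge> 1" if "\<Gamma>w \<ge> 1" "y \<ge> 1 - b"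
    using link that by (smt (verit) mult_nonneg_nonpos mult_pos_pos)
  moreover have "\<Gamma>m < 1" if "\<Gamma>w < 1" "y < 1 - b"
    using link that \<open>0 < b * (1 - b)\<close> \<open>0 < a * (1 - b)\<close> \<open>0 < b - a\<close>
    by (smt (verit) mult_nonneg_nonpos mult_pos_pos)
  ultimately consider "max \<Gamma>w \<Gamma>m < 1" | "\<Gamma>w \<ge> 1" "y < 1 - b" | "x < a" "\<Gamma>m \<ge> 1" | "x \<ge> a" "y \<ge> 1 - b"
    by (metis linorder_not_le max_less_iff_conj)
  then show ?thesis
    using linear_equilibrium_interior[OF assms] linear_equilibrium_zero_interior[OF assms]
      linear_equilibrium_interior_one[OF assms] linear_equilibrium_zero_one[OF assms]
    unfolding \<Gamma>w_def \<Gamma>m_def by cases blast+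
qed

lemma equilibrium_iff_linear_equilibrium:
  fixes hw hm Fw Fm :: "real \<Rightarrow> real"
  assumes "0 < r" "0 < Cw" "0 < Cm"
    and hw: "\<forall>u. 0 < u \<and> u \<le> 1 \<longrightarrow> hw u = cw / u"
    and hm: "\<forall>u. 0 < u \<and> u \<le> 1 \<longrightarrow> hm u = cm / u"
    and Fw: "\<forall>u. 0 < u \<and> u < 1 \<longrightarrow> Fw (1 - u) = Cw * (rew - u) / (u * (1 - u))"
    and Fm: "\<forall>u. 0 < u \<and> u < 1 \<longrightarrow> Fm (1 - u) = Cm * (rem - u) / (u * (1 - u))"
    and \<gamma>w: "\<gamma>w = cw * (1 / r) / Cw" "\<gamma>w < 1"
    and \<gamma>m: "\<gamma>m = cm * r / Cm" "\<gamma>m < 1"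
  shows "equilibrium hw hm Fw Fm r rw rm \<longleftrightarrow> linear_equilibrium rew rem \<gamma>w \<gamma>m rw rm"
proof (cases "rw \<in> {0..1} \<and> rm \<in> {0..1}")
  case True
  then have "best_response hw Fw (1 / r) rm rw \<longleftrightarrow> rw = linear_best_response rew \<gamma>w rm"
    and "best_response hm Fm r rw rm \<longleftrightarrow> rm = linear_best_response rem \<gamma>m rw"
    using best_response_reciprocal_iff[OF hw Fw \<open>0 < Cw\<close> _ \<gamma>w]
      best_response_reciprocal_iff[OF hm Fm \<open>0 < Cm\<close> \<open>0 < r\<close> \<gamma>m] \<open>0 < r\<close>
    by auto
  then show ?thesis
    unfolding equilibrium_iff_best_responses linear_equilibrium_def by (rule arg_cong2[where f = conj])
next
  case False
  have "linear_best_response a g y \<in> {0..1}" for a g y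
    by (simp add: linear_best_response_def)
  then have "\<not> linear_equilibrium rew rem \<gamma>w \<gamma>m rw rm"
    using False unfolding linear_equilibrium_def by metis
  moreover have "\<not> equilibrium hw hm Fw Fm r rw rm"
    using False unfolding equilibrium_def by blast
  ultimately show ?thesis
    by blast
qed

theorem proposition3:
  fixes hw hm Fw Fm :: "real \<Rightarrow> real"
    and \<mu>w \<mu>m rew rem cw cm Cw Cm \<gamma>w \<gamma>m :: real
  assumes "\<mu>w > 0" and "\<mu>m > 0"
    and "cw \<ge> 0" and "cm \<ge> 0" and "Cw > 0" and "Cm > 0"
    and hw: "\<forall>u. 0 < u \<and> u \<le> 1 \<longrightarrow> hw u = cw / u"
    and hm: "\<forall>u. 0 < u \<and> u \<le> 1 \<longrightarrow> hm u = cm / u"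
    and Fw: "\<forall>u. 0 < u \<and> u < 1 \<longrightarrow> Fw (1 - u) = Cw * (rew - u) / (u * (1 - u))"
    and Fm: "\<forall>u. 0 < u \<and> u < 1 \<longrightarrow> Fm (1 - u) = Cm * (rem - u) / (u * (1 - u))"
    and "\<gamma>w = (\<mu>m / \<mu>w) * (cw / Cw)"
    and "\<gamma>m = (\<mu>w / \<mu>m) * (cm / Cm)"
    and "0 < rew" and "rew < rem" and "rem < 1"
    and "\<gamma>w + \<gamma>m < 1"
  shows "(\<exists>!p. equilibrium hw hm Fw Fm (\<mu>w / \<mu>m) (fst p) (snd p)) \<and>
    (\<forall>rw rm. equilibrium hw hm Fw Fm (\<mu>w / \<mu>m) rw rm \<longrightarrow>
      (max (\<gamma>w * rem / rew + \<gamma>m) (\<gamma>w + \<gamma>m * (1 - rew) / (1 - rem)) < 1 \<longrightarrow>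
         rw = rew - \<gamma>w / (1 - \<gamma>w - \<gamma>m) * (rem - rew) \<and>
         rm = rem + \<gamma>m / (1 - \<gamma>w - \<gamma>m) * (rem - rew)) \<and>
      (\<gamma>w * rem / rew + \<gamma>m \<ge> 1 \<and> \<gamma>m < 1 - rem \<longrightarrow>
         rw = 0 \<and> rm = rem / (1 - \<gamma>m)) \<and>
      (\<gamma>w < rew \<and> \<gamma>w + \<gamma>m * (1 - rew) / (1 - rem) \<ge> 1 \<longrightarrow>
         rw = (rew - \<gamma>w) / (1 - \<gamma>w) \<and> rm = 1) \<and>
      (\<gamma>w \<ge> rew \<and> \<gamma>m \<ge> 1 - rem \<longrightarrow> rw = 0 \<and> rm = 1))"
proof -
  define r where "r = \<mu>w / \<mu>m"
  have "0 < r"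
    using \<open>\<mu>w > 0\<close> \<open>\<mu>m > 0\<close> by (simp add: r_def)
  have \<gamma>w: "\<gamma>w = cw * (1 / r) / Cw" and \<gamma>m: "\<gamma>m = cm * r / Cm"
    using assms(11,12) by (simp_all add: r_def)
  have "0 \<le> \<gamma>w" "0 \<le> \<gamma>m"
    using assms(1-6,11,12) by simp_all
  then have "\<gamma>w < 1" "\<gamma>m < 1"
    using \<open>\<gamma>w + \<gamma>m < 1\<close> by linarith+
  have eq_iff: "equilibrium hw hm Fw Fm r rw rm \<longleftrightarrow> linear_equilibrium rew rem \<gamma>w \<gamma>m rw rm" for rw rm
    by (rule equilibrium_iff_linear_equilibrium[OF \<open>0 < r\<close> \<open>Cw > 0\<close> \<open>Cm > 0\<close> hw hm Fw Fm
      \<gamma>w \<open>\<gamma>w < 1\<close> \<gamma>m \<open>\<gamma>m < 1\<close>])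
  note setting = \<open>0 < rew\<close> \<open>rew < rem\<close> \<open>rem < 1\<close> \<open>0 \<le> \<gamma>w\<close> \<open>0 \<le> \<gamma>m\<close> \<open>\<gamma>w + \<gamma>m < 1\<close>
  note unique = linear_equilibrium_unique[OF setting(4-6)]
  obtain p q where "linear_equilibrium rew rem \<gamma>w \<gamma>m p q"
    using linear_equilibrium_exists[OF setting] by blast
  then have "\<exists>!pq. linear_equilibrium rew rem \<gamma>w \<gamma>m (fst pq) (snd pq)"
    by (intro ex1I[of _ "(p, q)"]) (auto dest: unique simp: prod_eq_iff)
  then show ?thesis
    unfolding r_def[symmetric] eq_iff
    using unique linear_equilibrium_interior[OF setting] linear_equilibrium_zero_interior[OF setting]
      linear_equilibrium_interior_one[OF setting] linear_equilibrium_zero_one[OF setting]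
    by blast
qed

end
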